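(* Let $n \geq s$ be positive integers and let $P_0 > 0$. Let $\mathbf{\Psi}\in\mathbb{C}^{n\times n}$ be positive semi-definite with eigenvalue decomposition $\mathbf{\Psi} = \mathbf{U}_2\mathbf{\Lambda}_2\mathbf{U}_2^H$, where $\mathbf{U}_2$ is unitary and $\mathbf{\Lambda}_2$ is diagonal with diagonal entries $[\mathbf{\Lambda}_2]_{1,1}\geq \cdots \geq [\mathbf{\Lambda}_2]_{n,n}\geq 0$. Let $\mathbf{A}\in\mathbb{C}^{n\times s}$ satisfy $\text{tr}(\mathbf{A}\mathbf{A}^H)\leq P_0$, and let $\mathbf{A}^H\mathbf{\Psi}\mathbf{A}=\mathbf{U}_1\mathbf{\Lambda}_1\mathbf{U}_1^H$ be an eigenvalue decomposition, where $\mathbf{U}_1$ is unitary and $\mathbf{\Lambda}_1$ is diagonal with $[\mathbf{\Lambda}_1]_{1,1}\geq\cdots\geq[\mathbf{\Lambda}_1]_{s,s}\geq 0$. Define $\tilde{\mathbf{p}}\in\mathbb{R}^s$ by $[\tilde{\mathbf{p}}]_i = [\mathbf{\Lambda}_1]_{i,i}/[\mathbf{\Lambda}_2]_{i,i}$ for $i=1,\dots,s$ (with $[\tilde{\mathbf{p}}]_i = 0$ whenever $[\mathbf{\Lambda}_2]_{i,i}=0$), let $\mathbf{P}$ be the real $n\times s$ matrix $\mathbf{P} = \left[ \begin{array}{c} \text{diag}(\tilde{\mathbf{p}}) \\ \mathbf{0}_{(n-s)\times s} \end{array} \right]$, let $\mathbf{P}^{1/2}$ denote the entrywise square root of $\mathbf{P}$,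 and set $\tilde{\mathbf{A}}=\mathbf{U}_2\mathbf{P}^{1/2}$. Then $$\tilde{\mathbf{A}}^H\mathbf{\Psi}\tilde{\mathbf{A}} = \mathbf{\Lambda}_1 \quad \text{and} \quad \text{tr}(\tilde{\mathbf{A}}\tilde{\mathbf{A}}^H)\leq \text{tr}(\mathbf{A}\mathbf{A}^H).$$
   Context: $(\cdot)^H$ denotes conjugate transpose, $\text{tr}$ the trace, and $\text{diag}(\mathbf{x})$ the diagonal matrix whose diagonal entries are the entries of the vector $\mathbf{x}$. *)

theory Defs
  imports "Jordan_Normal_Form.Schur_Decomposition"
begin

text \<open>Conjugate transpose is the library's mat_adjoint.\<close>

definition mtrace :: "'a::comm_ring_1 mat \<Rightarrow> 'a" where
  "mtrace A = (\<Sum>i<dim_row A. A $$ (i, i))"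

definition unitary_mat :: "complex mat \<Rightarrow> nat \<Rightarrow> bool" where
  "unitary_mat U n \<longleftrightarrow> U \<in> carrier_mat n n \<and>
     mat_adjoint U * U = 1\<^sub>m n \<and> U * mat_adjoint U = 1\<^sub>m n"

definition hermitian_mat :: "complex mat \<Rightarrow> bool" where
  "hermitian_mat A \<longleftrightarrow> mat_adjoint A = A"

definition psd_mat :: "complex mat \<Rightarrow> nat \<Rightarrow> bool" where
  "psd_mat A n \<longleftrightarrow> A \<in> carrier_mat n n \<and> hermitian_mat A \<and>
     (\<forall>v \<in> carrier_vec n. Re (conjugate v \<bullet> (A *\<^sub>v v)) \<ge> 0 \<and>
                           Im (conjugate v \<bullet> (A *\<^sub>v v)) = 0)"

definition rdiag :: "nat \<Rightarrow> (nat \<Rightarrow> real) \<Rightarrow> complex mat" where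
  "rdiag n d = mat_diag n (\<lambda>i. complex_of_real (d i))"

end

theory Submission
  imports Defs
begin

text \<open>Replacing \<open>A\<close> by \<open>B = U\<^sub>2\<^sup>H A U\<^sub>1\<close> turns the hypotheses into
  \<open>B\<^sup>H \<Lambda>\<^sub>2 B = \<Lambda>\<^sub>1\<close> without changing the Frobenius norm, while the matrix \<open>At\<close> of the statement satisfies
  \<open>At\<^sup>H \<Psi> At = diag (p\<^sub>j \<lambda>\<^sub>2\<^sub>j)\<close> and \<open>tr (At At\<^sup>H) = \<Sum>\<^sub>j p\<^sub>j\<close>. So it suffices to show
  \<open>\<Sum>\<^sub>j \<lambda>\<^sub>1\<^sub>j / \<lambda>\<^sub>2\<^sub>j \<le> \<parallel>B\<parallel>\<^sub>F\<^sup>2\<close> and that \<open>\<lambda>\<^sub>2\<^sub>j = 0\<close> forces \<open>\<lambda>\<^sub>1\<^sub>j = 0\<close>.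

  With \<open>W\<^sub>j\<^sub>k = |B\<^sub>k\<^sub>j|\<^sup>2\<close>, the diagonal of \<open>B\<^sup>H \<Lambda>\<^sub>2 B = \<Lambda>\<^sub>1\<close> says that
  \<open>M\<^sub>j\<^sub>k = \<lambda>\<^sub>2\<^sub>k W\<^sub>j\<^sub>k / \<lambda>\<^sub>1\<^sub>j\<close> has unit row sums, and Bessel's inequality for the orthonormal
  columns of \<open>\<Lambda>\<^sub>2\<^sup>1\<^sup>/\<^sup>2 B \<Lambda>\<^sub>1\<^sup>-\<^sup>1\<^sup>/\<^sup>2\<close> says that its column sums are at most 1. Since
  \<open>\<lambda>\<^sub>1\<close> decreases and \<open>1 / \<lambda>\<^sub>2\<close> increases, Abel summation against this doubly
  substochastic matrix gives \<open>\<Sum>\<^sub>j \<lambda>\<^sub>1\<^sub>j / \<lambda>\<^sub>2\<^sub>j \<le> \<Sum>\<^sub>j\<^sub>k \<lambda>\<^sub>1\<^sub>j M\<^sub>j\<^sub>k / \<lambda>\<^sub>2\<^sub>k = \<parallel>B\<parallel>\<^sub>F\<^sup>2\<close>.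
  The same estimate with an arbitrarily large weight in place of \<open>1 / \<lambda>\<^sub>2\<^sub>k\<close> where
  \<open>\<lambda>\<^sub>2\<^sub>k = 0\<close> shows that \<open>\<lambda>\<^sub>2\<^sub>j = 0\<close> forces \<open>\<lambda>\<^sub>1\<^sub>j = 0\<close>.\<close>

lemma dim_mat_adjoint [simp]:
  "dim_row (mat_adjoint A) = dim_col A" "dim_col (mat_adjoint A) = dim_row A"
  unfolding mat_adjoint_def by simp_all

lemma carrier_mat_adjoint [simp]: "A \<in> carrier_mat n m \<Longrightarrow> mat_adjoint A \<in> carrier_mat m n"
  unfolding carrier_mat_def by simp

lemma index_mat_adjoint [simp]:
  "i < dim_col A \<Longrightarrow> j < dim_row A \<Longrightarrow> mat_adjoint (A :: complex mat) $$ (i, j) = cnj (A $$ (j, i))"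
  unfolding mat_adjoint_def by (simp add: mat_of_rows_def)

lemma mat_adjoint_adjoint [simp]: "mat_adjoint (mat_adjoint (A :: complex mat)) = A"
  by (rule eq_matI) auto

lemma mat_adjoint_mult:
  "dim_col (A :: complex mat) = dim_row B \<Longrightarrow> mat_adjoint (A * B) = mat_adjoint B * mat_adjoint A"
  by (rule eq_matI) (auto simp: scalar_prod_def mult.commute)

lemma mult_mat_assoc: "dim_col A = dim_row B \<Longrightarrow> dim_col B = dim_row C \<Longrightarrow> A * B * C = A * (B * C)"
  by (rule assoc_mult_mat[of A _ _ B _ C]) auto

lemma rdiag_carrier [simp]: "rdiag n d \<in> carrier_mat n n"
  unfolding rdiag_def by simp

lemma dim_rdiag [simp]: "dim_row (rdiag n d) = n" "dim_col (rdiag n d) = n"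
  unfolding rdiag_def mat_diag_def by simp_all

lemma index_rdiag: "i < n \<Longrightarrow> j < n \<Longrightarrow> rdiag n d $$ (i, j) = (if i = j then complex_of_real (d i) else 0)"
  unfolding rdiag_def mat_diag_def by simp

lemma rdiag_cong: "(\<And>i. i < n \<Longrightarrow> a i = b i) \<Longrightarrow> rdiag n a = rdiag n b"
  by (rule eq_matI) (auto simp: index_rdiag)

lemma mat_adjoint_rdiag [simp]: "mat_adjoint (rdiag n d) = rdiag n d"
  by (rule eq_matI) (auto simp: index_rdiag)

lemma rdiag_mult_rdiag [simp]: "rdiag n a * rdiag n b = rdiag n (\<lambda>i. a i * b i)"
  unfolding rdiag_def by simp

lemma index_rdiag_mult_rdiag:
  assumes "X \<in> carrier_mat n m" "i < n" "j < m"
  shows "(rdiag n a * X * rdiag m b) $$ (i, j) = complex_of_real (a i) * X $$ (i, j) * complex_of_real (b j)"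
  using assms by (simp add: rdiag_def mat_diag_mult_left[OF assms(1)] mat_diag_mult_right[of _ n m])

lemma index_adjoint_rdiag_mult:
  assumes "X \<in> carrier_mat n m" "Y \<in> carrier_mat n p" "i < m" "j < p"
  shows "(mat_adjoint X * rdiag n d * Y) $$ (i, j) = (\<Sum>k<n. cnj (X $$ (k, i)) * complex_of_real (d k) * Y $$ (k, j))"
  using assms
  by (simp add: rdiag_def mat_diag_mult_right[of "mat_adjoint X" m n] scalar_prod_def atLeast0LessThan)

lemma unitary_matD:
  assumes "unitary_mat U n"
  shows "U \<in> carrier_mat n n" "mat_adjoint U * U = 1\<^sub>m n" "U * mat_adjoint U = 1\<^sub>m n"
  using assms unfolding unitary_mat_def by auto

lemma unitary_mat_adjoint: "unitary_mat U n \<Longrightarrow> unitary_mat (mat_adjoint U) n"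
  unfolding unitary_mat_def by auto

lemma unitary_mat_cancel:
  assumes "unitary_mat U n" "dim_row X = n"
  shows "mat_adjoint U * (U * X) = X" "U * (mat_adjoint U * X) = X"
  using unitary_matD[OF assms(1)] assms(2) by (simp_all flip: mult_mat_assoc)

lemma mtrace_mult_comm:
  assumes "(A :: 'a :: comm_ring_1 mat) \<in> carrier_mat n m" "B \<in> carrier_mat m n"
  shows "mtrace (A * B) = mtrace (B * A)"
proof -
  have "mtrace (A * B) = (\<Sum>i<n. \<Sum>k<m. A $$ (i, k) * B $$ (k, i))"
    using assms by (simp add: mtrace_def scalar_prod_def atLeast0LessThan)
  also have "\<dots> = (\<Sum>k<m. \<Sum>i<n. B $$ (k, i) * A $$ (i, k))"
    by (subst sum.swap) (simp add: mult.commute)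
  also have "\<dots> = mtrace (B * A)"
    using assms by (simp add: mtrace_def scalar_prod_def atLeast0LessThan)
  finally show ?thesis .
qed

lemma mtrace_mult_adjoint_unitary_left:
  assumes U: "unitary_mat U n" and X: "X \<in> carrier_mat n m"
  shows "mtrace (U * X * mat_adjoint (U * X)) = mtrace (X * mat_adjoint X)"
proof -
  note U_mat = unitary_matD[OF U]
  have Y: "X * mat_adjoint X * mat_adjoint U \<in> carrier_mat n n"
    using X U_mat by (intro mult_carrier_mat[of _ n n] mult_carrier_mat[of _ n m]) auto
  have "U * X * mat_adjoint (U * X) = U * (X * mat_adjoint X * mat_adjoint U)"
    using X U_mat by (simp add: mat_adjoint_mult mult_mat_assoc)
  then have "mtrace (U * X * mat_adjoint (U * X)) = mtrace (X * mat_adjoint X * mat_adjoint U * U)"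
    using mtrace_mult_comm[OF U_mat(1) Y] by simp
  also have "\<dots> = mtrace (X * mat_adjoint X)"
    using X U_mat by (simp add: mult_mat_assoc)
  finally show ?thesis .
qed

lemma mtrace_mult_adjoint:
  "mtrace (A * mat_adjoint A) = complex_of_real (\<Sum>i<dim_row A. \<Sum>j<dim_col A. (cmod (A $$ (i, j)))\<^sup>2)"
  by (simp add: mtrace_def scalar_prod_def atLeast0LessThan complex_norm_square del: of_real_power)

lemma partial_isometry_row_norm_le_1:
  assumes E: "E \<in> carrier_mat n s" and partial_isometry: "E * (mat_adjoint E * E) = E" and k: "k < n"
  shows "(\<Sum>j<s. (cmod (E $$ (k, j)))\<^sup>2) \<le> 1"
proof -
  define c where "c = (\<Sum>j<s. (cmod (E $$ (k, j)))\<^sup>2)"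
  define P where "P = E * mat_adjoint E"
  have P: "P \<in> carrier_mat n n"
    unfolding P_def using E by simp
  have "P * P = E * (mat_adjoint E * E) * mat_adjoint E"
    unfolding P_def using E by (simp add: mult_mat_assoc)
  then have idempotent: "P * P = P"
    unfolding partial_isometry P_def .
  have P_hermitian: "P $$ (i, k) = cnj (P $$ (k, i))" if "i < n" for i
    unfolding P_def using E k that by (simp add: scalar_prod_def mult.commute)
  have "0 \<le> c"
    unfolding c_def by (simp add: sum_nonneg)
  have P_kk: "P $$ (k, k) = complex_of_real c"
    unfolding P_def c_def using E k
    by (simp add: scalar_prod_def atLeast0LessThan complex_norm_square del: of_real_power)
  moreover have "(P * P) $$ (k, k) = complex_of_real (\<Sum>i<n. (cmod (P $$ (k, i)))\<^sup>2)"
    using P k by (simp add: scalar_prod_def atLeast0LessThan P_hermitian complex_norm_square del: of_real_power)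
  ultimately have "c = (\<Sum>i<n. (cmod (P $$ (k, i)))\<^sup>2)"
    using idempotent of_real_eq_iff by metis
  also have "\<dots> \<ge> (cmod (P $$ (k, k)))\<^sup>2"
    using k by (intro member_le_sum) auto
  finally have "c\<^sup>2 \<le> c"
    using P_kk \<open>0 \<le> c\<close> by simp
  show ?thesis
    unfolding c_def[symmetric]
  proof (rule ccontr)
    assume "\<not> c \<le> 1"
    then have "c * 1 < c * c"
      by (intro mult_strict_left_mono) auto
    with \<open>c\<^sup>2 \<le> c\<close> show False
      by (simp add: power2_eq_square)
  qed
qed

lemma diag_congruence_diag_entry:
  assumes B: "B \<in> carrier_mat n s" and gram: "mat_adjoint B * rdiag n l2 * B = rdiag s l1" and j: "j < s"
  shows "(\<Sum>k<n. l2 k * (cmod (B $$ (k, j)))\<^sup>2) = l1 j"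
proof -
  have "complex_of_real (l1 j) = (mat_adjoint B * rdiag n l2 * B) $$ (j, j)"
    using j by (simp add: gram index_rdiag)
  also have "\<dots> = complex_of_real (\<Sum>k<n. l2 k * (cmod (B $$ (k, j)))\<^sup>2)"
    by (simp add: index_adjoint_rdiag_mult[OF B B j j] complex_norm_square mult_ac del: of_real_power)
  finally show ?thesis
    using of_real_eq_iff by metis
qed

text \<open>The columns of \<open>E\<close> below are orthonormal or zero. Indices with \<open>l1 j = 0\<close> cost nothing:
  there \<open>inverse (sqrt 0) = 0\<close> kills the column of \<open>E\<close> and \<open>x / 0 = 0\<close> the summand.\<close>

lemma diag_congruence_bessel:
  assumes B: "B \<in> carrier_mat n s" and gram: "mat_adjoint B * rdiag n l2 * B = rdiag s l1"
    and l2_nonneg: "\<And>k. k < n \<Longrightarrow> 0 \<le> l2 k" and l1_nonneg: "\<And>j. j < s \<Longrightarrow> 0 \<le> l1 j"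
    and k: "k < n"
  shows "(\<Sum>j<s. l2 k * (cmod (B $$ (k, j)))\<^sup>2 / l1 j) \<le> 1"
proof -
  define a where "a k = sqrt (l2 k)" for k
  define b where "b j = inverse (sqrt (l1 j))" for j
  define E where "E = rdiag n a * B * rdiag s b"
  have E: "E \<in> carrier_mat n s"
    unfolding E_def using B by (intro mult_carrier_mat[of _ n s] mult_carrier_mat[of _ n n]) auto
  have "mat_adjoint E * E = rdiag s b * (mat_adjoint B * (rdiag n a * rdiag n a) * B) * rdiag s b"
    unfolding E_def using B by (simp add: mat_adjoint_mult mult_mat_assoc del: rdiag_mult_rdiag)
  also have "rdiag n a * rdiag n a = rdiag n l2"
    unfolding rdiag_mult_rdiag by (rule rdiag_cong) (simp add: a_def l2_nonneg)
  finally have gram_E: "mat_adjoint E * E = rdiag s (\<lambda>j. b j * l1 j * b j)"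
    using B by (simp add: gram mult_mat_assoc)
  have "E * (mat_adjoint E * E) = rdiag n a * B * rdiag s (\<lambda>j. b j * (b j * l1 j * b j))"
    unfolding gram_E unfolding E_def using B by (simp add: mult_mat_assoc)
  also have "rdiag s (\<lambda>j. b j * (b j * l1 j * b j)) = rdiag s b"
    by (rule rdiag_cong) (simp add: b_def l1_nonneg field_simps)
  finally have "E * (mat_adjoint E * E) = E"
    unfolding E_def .
  then have "(\<Sum>j<s. (cmod (E $$ (k, j)))\<^sup>2) \<le> 1"
    using partial_isometry_row_norm_le_1[OF E] k by blast
  moreover have "(cmod (E $$ (k, j)))\<^sup>2 = l2 k * (cmod (B $$ (k, j)))\<^sup>2 / l1 j" if "j < s" for j
  proof -
    have "cmod (E $$ (k, j)) = sqrt (l2 k) * cmod (B $$ (k, j)) * inverse (sqrt (l1 j))"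
      unfolding E_def index_rdiag_mult_rdiag[OF B k that] using k that l2_nonneg l1_nonneg
      by (simp add: a_def b_def norm_mult norm_inverse)
    then show ?thesis
      using k that l2_nonneg l1_nonneg
      by (simp add: power_mult_distrib power_inverse divide_inverse)
  qed
  ultimately show ?thesis
    by simp
qed

text \<open>With \<open>t = y (m - 1)\<close>, every term \<open>(y k - t) * (c k - of_bool (k < m))\<close> is nonnegative,
  where \<open>c k\<close> is the \<open>k\<close>-th column sum of the first \<open>m\<close> rows; summing them gives the claim.\<close>

lemma prefix_sum_le_substochastic:
  fixes y :: "nat \<Rightarrow> real" and M :: "nat \<Rightarrow> nat \<Rightarrow> real"
  assumes "m \<le> n"
    and y_mono: "\<And>i j. i \<le> j \<Longrightarrow> j < n \<Longrightarrow> y i \<le> y j"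
    and M_nonneg: "\<And>j k. j < m \<Longrightarrow> k < n \<Longrightarrow> 0 \<le> M j k"
    and rows: "\<And>j. j < m \<Longrightarrow> (\<Sum>k<n. M j k) = 1"
    and cols: "\<And>k. k < n \<Longrightarrow> (\<Sum>j<m. M j k) \<le> 1"
  shows "(\<Sum>j<m. y j) \<le> (\<Sum>j<m. \<Sum>k<n. y k * M j k)"
proof -
  define t where "t = y (m - 1)"
  define c where "c k = (\<Sum>j<m. M j k)" for k
  have "{..<n} \<inter> {k. k < m} = {..<m}"
    using \<open>m \<le> n\<close> by auto
  then have ind_sum: "(\<Sum>k<n. f k * of_bool (k < m)) = (\<Sum>k<m. f k)" for f :: "nat \<Rightarrow> real"
    by (simp add: sum.inter_filter[symmetric])
  have "0 \<le> (\<Sum>k<n. (y k - t) * (c k - of_bool (k < m)))"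
  proof (intro sum_nonneg)
    fix k assume "k \<in> {..<n}"
    then have "k < n" by simp
    show "0 \<le> (y k - t) * (c k - of_bool (k < m))"
    proof (cases "k < m")
      case True
      then have "y k \<le> t" and "c k \<le> 1"
        using y_mono[of k "m - 1"] cols[of k] \<open>k < n\<close> \<open>m \<le> n\<close> by (auto simp: t_def c_def)
      with True show ?thesis by (simp add: mult_nonpos_nonpos)
    next
      case False
      then have "t \<le> y k" and "0 \<le> c k"
        using y_mono[of "m - 1" k] M_nonneg \<open>k < n\<close> by (auto simp: t_def c_def intro: sum_nonneg)
      with False show ?thesis by simp
    qed
  qed
  also have "\<dots> = (\<Sum>k<n. y k * c k) - (\<Sum>j<m. y j) - t * ((\<Sum>k<n. c k) - real m)"
    using ind_sum[of y] ind_sum[of "\<lambda>_. 1"]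
    by (simp add: algebra_simps sum.distrib sum_subtractf sum_distrib_left)
  also have "(\<Sum>k<n. c k) = real m"
    unfolding c_def by (subst sum.swap) (simp add: rows)
  also have "(\<Sum>k<n. y k * c k) = (\<Sum>j<m. \<Sum>k<n. y k * M j k)"
    unfolding c_def by (subst sum.swap) (simp add: sum_distrib_left)
  finally show ?thesis by simp
qed

text \<open>Abel summation reduces the claim to the prefix sums of the row defects \<open>d j\<close>, which are
  nonnegative by the previous lemma as long as the prefix lies where \<open>x\<close> is positive.\<close>

lemma substochastic_rearrangement:
  fixes x y :: "nat \<Rightarrow> real" and M :: "nat \<Rightarrow> nat \<Rightarrow> real"
  assumes "s \<le> n"
    and x_antimono: "\<And>i j. i \<le> j \<Longrightarrow> j < s \<Longrightarrow> x j \<le> x i"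
    and x_nonneg: "\<And>j. j < s \<Longrightarrow> 0 \<le> x j"
    and y_mono: "\<And>i j. i \<le> j \<Longrightarrow> j < n \<Longrightarrow> y i \<le> y j"
    and M_nonneg: "\<And>j k. j < s \<Longrightarrow> k < n \<Longrightarrow> 0 \<le> M j k"
    and rows: "\<And>j. j < s \<Longrightarrow> 0 < x j \<Longrightarrow> (\<Sum>k<n. M j k) = 1"
    and cols: "\<And>k. k < n \<Longrightarrow> (\<Sum>j<s. M j k) \<le> 1"
  shows "(\<Sum>j<s. x j * y j) \<le> (\<Sum>j<s. \<Sum>k<n. x j * y k * M j k)"
proof -
  define d where "d j = (\<Sum>k<n. y k * M j k) - y j" for j
  define z where "z j = (if j < s then x j else 0)" for j
  have prefix: "0 \<le> (\<Sum>j<m. d j)" if "m \<le> s" and pos: "0 < z (m - 1)" for m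
  proof -
    have "(\<Sum>j<m. y j) \<le> (\<Sum>j<m. \<Sum>k<n. y k * M j k)"
    proof (rule prefix_sum_le_substochastic)
      show "(\<Sum>k<n. M j k) = 1" if "j < m" for j
      proof (rule rows)
        have "j \<le> m - 1"
          using that by simp
        then show "0 < x j"
          using pos x_antimono[of j "m - 1"] by (auto simp: z_def split: if_splits)
      qed (use that \<open>m \<le> s\<close> in simp)
      show "(\<Sum>j<m. M j k) \<le> 1" if "k < n" for k
        using cols[OF that] sum_mono2[of "{..<s}" "{..<m}" "\<lambda>j. M j k"] M_nonneg that \<open>m \<le> s\<close>
        by fastforce
    qed (use y_mono M_nonneg that \<open>s \<le> n\<close> in auto)
    then show ?thesis
      by (simp add: d_def sum_subtractf)
  qed
  have abel: "z m * (\<Sum>j<m. d j) \<le> (\<Sum>j<m. x j * d j)" if "m \<le> s" for m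
    using that
  proof (induction m)
    case 0
    then show ?case by simp
  next
    case (Suc m)
    have "z (Suc m) \<le> z m"
      using Suc.prems x_antimono[of m "Suc m"] x_nonneg[of m] by (simp add: z_def)
    have "0 \<le> (z m - z (Suc m)) * (\<Sum>j<Suc m. d j)"
    proof (cases "z (Suc m) < z m")
      case True
      moreover have "0 \<le> z (Suc m)"
        using x_nonneg by (simp add: z_def)
      ultimately show ?thesis
        using prefix[of "Suc m"] Suc.prems by simp
    next
      case False
      with \<open>z (Suc m) \<le> z m\<close> show ?thesis by simp
    qed
    then have "z (Suc m) * (\<Sum>j<Suc m. d j) \<le> z m * (\<Sum>j<m. d j) + x m * d m"
      using Suc.prems by (simp add: z_def algebra_simps)
    also have "\<dots> \<le> (\<Sum>j<Suc m. x j * d j)"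
      using Suc by simp
    finally show ?case .
  qed
  have "0 \<le> (\<Sum>j<s. x j * d j)"
    using abel[of s] by (simp add: z_def)
  then show ?thesis
    by (simp add: d_def algebra_simps sum_subtractf sum_distrib_left)
qed

context
  fixes n s :: nat and l1 l2 :: "nat \<Rightarrow> real" and W :: "nat \<Rightarrow> nat \<Rightarrow> real"
  assumes s_le_n: "s \<le> n"
    and l2_antimono: "\<And>i j. i \<le> j \<Longrightarrow> j < n \<Longrightarrow> l2 j \<le> l2 i"
    and l2_nonneg: "\<And>k. k < n \<Longrightarrow> 0 \<le> l2 k"
    and l1_antimono: "\<And>i j. i \<le> j \<Longrightarrow> j < s \<Longrightarrow> l1 j \<le> l1 i"
    and l1_nonneg: "\<And>j. j < s \<Longrightarrow> 0 \<le> l1 j"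
    and W_nonneg: "\<And>j k. j < s \<Longrightarrow> k < n \<Longrightarrow> 0 \<le> W j k"
    and W_rows: "\<And>j. j < s \<Longrightarrow> (\<Sum>k<n. l2 k * W j k) = l1 j"
    and W_cols: "\<And>k. k < n \<Longrightarrow> (\<Sum>j<s. l2 k * W j k / l1 j) \<le> 1"
begin

text \<open>\<open>Y\<close> stands in for \<open>1 / l2 k\<close> where \<open>l2 k = 0\<close>: the rows of \<open>W\<close> vanish there, so any
  value keeping the weights increasing will do.\<close>

lemma weighted_sum_le_total_weight:
  assumes Y: "\<And>k. k < n \<Longrightarrow> 1 / l2 k \<le> Y"
  shows "(\<Sum>j<s. l1 j * (if l2 j = 0 then Y else 1 / l2 j)) \<le> (\<Sum>j<s. \<Sum>k<n. W j k)"
proof -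
  define y where "y k = (if l2 k = 0 then Y else 1 / l2 k)" for k
  define M where "M j k = l2 k * W j k / l1 j" for j k
  have "(\<Sum>j<s. l1 j * y j) \<le> (\<Sum>j<s. \<Sum>k<n. l1 j * y k * M j k)"
  proof (rule substochastic_rearrangement[OF s_le_n l1_antimono l1_nonneg])
    show "y i \<le> y j" if "i \<le> j" "j < n" for i j
    proof (cases "l2 j = 0")
      case True
      then show ?thesis
        using Y[of i] that by (simp add: y_def)
    next
      case False
      then have "0 < l2 j" "l2 j \<le> l2 i"
        using l2_nonneg[of j] l2_antimono[of i j] that by auto
      then show ?thesis
        by (simp add: y_def frac_le)
    qed
    show "0 \<le> M j k" if "j < s" "k < n" for j k
      using that by (simp add: M_def l1_nonneg l2_nonneg W_nonneg)
    show "(\<Sum>k<n. M j k) = 1" if "j < s" "0 < l1 j" for j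
      using that W_rows[of j] by (simp add: M_def sum_divide_distrib[symmetric])
    show "(\<Sum>j<s. M j k) \<le> 1" if "k < n" for k
      using W_cols[OF that] by (simp add: M_def)
  qed
  also have "\<dots> \<le> (\<Sum>j<s. \<Sum>k<n. W j k)"
  proof (intro sum_mono)
    fix j k assume "j \<in> {..<s}" "k \<in> {..<n}"
    then show "l1 j * y k * M j k \<le> W j k"
      using W_nonneg[of j k] by (cases "l1 j = 0 \<or> l2 k = 0") (auto simp: y_def M_def)
  qed
  finally show ?thesis
    by (simp add: y_def)
qed

lemma l1_eq_0_if_l2_eq_0:
  assumes j: "j < s" and "l2 j = 0"
  shows "l1 j = 0"
proof (rule ccontr)
  assume "l1 j \<noteq> 0"
  then have "0 < l1 j"
    using l1_nonneg[OF j] by simp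
  define N where "N = (\<Sum>j<s. \<Sum>k<n. W j k)"
  define Y where "Y = (\<Sum>k<n. 1 / l2 k) + (N + 1) / l1 j"
  have "0 \<le> N"
    unfolding N_def by (intro sum_nonneg) (simp add: W_nonneg)
  have "0 \<le> (\<Sum>k<n. 1 / l2 k)"
    by (intro sum_nonneg) (simp add: l2_nonneg)
  moreover have "l1 j * Y = l1 j * (\<Sum>k<n. 1 / l2 k) + (N + 1)"
    using \<open>0 < l1 j\<close> by (simp add: Y_def distrib_left field_simps)
  ultimately have "N + 1 \<le> l1 j * Y"
    using \<open>0 < l1 j\<close> by simp
  also have "\<dots> = l1 j * (if l2 j = 0 then Y else 1 / l2 j)"
    using \<open>l2 j = 0\<close> by simp
  also have "\<dots> \<le> (\<Sum>i<s. l1 i * (if l2 i = 0 then Y else 1 / l2 i))"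
    using j \<open>0 \<le> (\<Sum>k<n. 1 / l2 k)\<close> \<open>0 \<le> N\<close> \<open>0 < l1 j\<close> s_le_n
    by (intro member_le_sum) (auto simp: Y_def l1_nonneg l2_nonneg)
  also have "\<dots> \<le> N"
    unfolding N_def
  proof (rule weighted_sum_le_total_weight)
    fix k assume "k < n"
    then have "1 / l2 k \<le> (\<Sum>k<n. 1 / l2 k)"
      by (intro member_le_sum) (auto simp: l2_nonneg)
    then show "1 / l2 k \<le> Y"
      using \<open>0 \<le> N\<close> \<open>0 < l1 j\<close> unfolding Y_def by (intro add_increasing2) simp_all
  qed
  finally show False
    by simp
qed

lemma sum_ratio_le_total_weight:
  "(\<Sum>j<s. if l2 j = 0 then 0 else l1 j / l2 j) \<le> (\<Sum>j<s. \<Sum>k<n. W j k)"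
proof -
  define Y where "Y = (\<Sum>k<n. 1 / l2 k)"
  have "0 \<le> Y"
    unfolding Y_def by (intro sum_nonneg) (simp add: l2_nonneg)
  have "(\<Sum>j<s. if l2 j = 0 then 0 else l1 j / l2 j) \<le> (\<Sum>j<s. l1 j * (if l2 j = 0 then Y else 1 / l2 j))"
    using \<open>0 \<le> Y\<close> by (intro sum_mono) (simp add: l1_nonneg)
  also have "\<dots> \<le> (\<Sum>j<s. \<Sum>k<n. W j k)"
    unfolding Y_def by (rule weighted_sum_le_total_weight) (auto simp: l2_nonneg intro: member_le_sum)
  finally show ?thesis .
qed

end

lemma diag_congruence_ratio_le_frobenius:
  assumes B: "B \<in> carrier_mat n s" and gram: "mat_adjoint B * rdiag n l2 * B = rdiag s l1"
    and "s \<le> n"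
    and "\<And>i j. i \<le> j \<Longrightarrow> j < n \<Longrightarrow> l2 j \<le> l2 i" and l2_nonneg: "\<And>k. k < n \<Longrightarrow> 0 \<le> l2 k"
    and "\<And>i j. i \<le> j \<Longrightarrow> j < s \<Longrightarrow> l1 j \<le> l1 i" and l1_nonneg: "\<And>j. j < s \<Longrightarrow> 0 \<le> l1 j"
  shows "\<And>j. j < s \<Longrightarrow> l2 j = 0 \<Longrightarrow> l1 j = 0"
    and "(\<Sum>j<s. if l2 j = 0 then 0 else l1 j / l2 j) \<le> Re (mtrace (B * mat_adjoint B))"
proof -
  define W where "W j k = (cmod (B $$ (k, j)))\<^sup>2" for j k
  have W_nonneg: "\<And>j k. j < s \<Longrightarrow> k < n \<Longrightarrow> 0 \<le> W j k"
    by (simp add: W_def)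
  have W_rows: "\<And>j. j < s \<Longrightarrow> (\<Sum>k<n. l2 k * W j k) = l1 j"
    using diag_congruence_diag_entry[OF B gram] by (simp add: W_def)
  have W_cols: "\<And>k. k < n \<Longrightarrow> (\<Sum>j<s. l2 k * W j k / l1 j) \<le> 1"
    using diag_congruence_bessel[OF B gram l2_nonneg l1_nonneg] by (simp add: W_def)
  note weights = assms(3-7) W_nonneg W_rows W_cols
  show "\<And>j. j < s \<Longrightarrow> l2 j = 0 \<Longrightarrow> l1 j = 0"
    by (rule l1_eq_0_if_l2_eq_0[OF weights])
  have "Re (mtrace (B * mat_adjoint B)) = (\<Sum>j<s. \<Sum>k<n. W j k)"
    using B by (simp add: mtrace_mult_adjoint W_def sum.swap[of _ "{..<n}"] del: of_real_sum)
  then show "(\<Sum>j<s. if l2 j = 0 then 0 else l1 j / l2 j) \<le> Re (mtrace (B * mat_adjoint B))"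
    using sum_ratio_le_total_weight[OF weights] by simp
qed

lemma unitary_congruence:
  assumes "unitary_mat U n" "D \<in> carrier_mat n n" "X \<in> carrier_mat n m"
  shows "mat_adjoint (U * X) * (U * D * mat_adjoint U) * (U * X) = mat_adjoint X * D * X"
  using unitary_matD[OF assms(1)] assms(2,3)
  by (simp add: mat_adjoint_mult mult_mat_assoc unitary_mat_cancel[OF assms(1)])

lemma unitary_diagonalization_reduce:
  assumes U2: "unitary_mat U2 n" and U1: "unitary_mat U1 s" and A: "A \<in> carrier_mat n s"
    and D2: "D2 \<in> carrier_mat n n" and D1: "D1 \<in> carrier_mat s s"
    and diag: "mat_adjoint A * (U2 * D2 * mat_adjoint U2) * A = U1 * D1 * mat_adjoint U1"
  defines "B \<equiv> mat_adjoint U2 * A * U1"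
  shows "B \<in> carrier_mat n s" and "mat_adjoint B * D2 * B = D1"
    and "mtrace (B * mat_adjoint B) = mtrace (A * mat_adjoint A)"
proof -
  note U1_mat = unitary_matD[OF U1] and U2_mat = unitary_matD[OF U2]
  show "B \<in> carrier_mat n s"
    unfolding B_def using A U1_mat U2_mat by (intro mult_carrier_mat[of _ n n] mult_carrier_mat[of _ n s]) auto
  have "mat_adjoint B * D2 * B = mat_adjoint U1 * (mat_adjoint A * (U2 * D2 * mat_adjoint U2) * A) * U1"
    unfolding B_def using A D2 U1_mat U2_mat by (simp add: mat_adjoint_mult mult_mat_assoc)
  also have "\<dots> = D1"
    unfolding diag using D1 U1_mat by (simp add: mult_mat_assoc unitary_mat_cancel[OF U1])
  finally show "mat_adjoint B * D2 * B = D1" .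
  show "mtrace (B * mat_adjoint B) = mtrace (A * mat_adjoint A)"
    unfolding B_def using A U1_mat U2_mat
    by (simp add: mat_adjoint_mult mult_mat_assoc unitary_mat_cancel[OF U1]
        flip: mtrace_mult_adjoint_unitary_left[OF unitary_mat_adjoint[OF U2] A])
qed

definition rect_diag :: "nat \<Rightarrow> nat \<Rightarrow> (nat \<Rightarrow> real) \<Rightarrow> complex mat" where
  "rect_diag n s d = mat n s (\<lambda>(i, j). if i = j then complex_of_real (d j) else 0)"

lemma rect_diag_carrier [simp]: "rect_diag n s d \<in> carrier_mat n s"
  unfolding rect_diag_def by simp

lemma dim_rect_diag [simp]: "dim_row (rect_diag n s d) = n" "dim_col (rect_diag n s d) = s"
  unfolding rect_diag_def by simp_all

lemma rect_diag_congruence: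
  assumes "s \<le> n"
  shows "mat_adjoint (rect_diag n s d) * rdiag n l * rect_diag n s d = rdiag s (\<lambda>j. (d j)\<^sup>2 * l j)"
proof (rule eq_matI)
  fix i j assume "i < dim_row (rdiag s (\<lambda>j. (d j)\<^sup>2 * l j))" "j < dim_col (rdiag s (\<lambda>j. (d j)\<^sup>2 * l j))"
  then have ij: "i < s" "j < s" by simp_all
  have "(mat_adjoint (rect_diag n s d) * rdiag n l * rect_diag n s d) $$ (i, j)
      = (\<Sum>k<n. if k = i then (if i = j then complex_of_real ((d i)\<^sup>2 * l i) else 0) else 0)"
    unfolding index_adjoint_rdiag_mult[OF rect_diag_carrier rect_diag_carrier ij]
    using ij assms by (intro sum.cong refl) (auto simp: rect_diag_def power2_eq_square)
  also have "\<dots> = rdiag s (\<lambda>j. (d j)\<^sup>2 * l j) $$ (i, j)"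
    using ij assms by (simp add: index_rdiag)
  finally show "(mat_adjoint (rect_diag n s d) * rdiag n l * rect_diag n s d) $$ (i, j)
      = rdiag s (\<lambda>j. (d j)\<^sup>2 * l j) $$ (i, j)" .
qed auto

lemma mtrace_rect_diag:
  assumes "s \<le> n"
  shows "mtrace (rect_diag n s d * mat_adjoint (rect_diag n s d)) = complex_of_real (\<Sum>j<s. (d j)\<^sup>2)"
proof -
  have "(\<Sum>i<n. \<Sum>j<s. (cmod (rect_diag n s d $$ (i, j)))\<^sup>2) = (\<Sum>j<s. \<Sum>i<n. if i = j then (d j)\<^sup>2 else 0)"
    by (subst sum.swap, intro sum.cong refl) (auto simp: rect_diag_def)
  also have "\<dots> = (\<Sum>j<s. (d j)\<^sup>2)"
    using assms by (auto intro!: sum.cong)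
  finally show ?thesis
    by (simp add: mtrace_mult_adjoint del: of_real_sum)
qed

theorem theorem1:
  fixes n s :: nat and P0 :: real
    and Psi U2 A U1 :: "complex mat"
    and l2 l1 :: "nat \<Rightarrow> real"
  assumes "0 < s" and "s \<le> n" and "P0 > 0"
    and "psd_mat Psi n"
    and "unitary_mat U2 n"
    and "\<And>i j. i \<le> j \<Longrightarrow> j < n \<Longrightarrow> l2 j \<le> l2 i"
    and "\<And>i. i < n \<Longrightarrow> 0 \<le> l2 i"
    and "Psi = U2 * rdiag n l2 * mat_adjoint U2"
    and "A \<in> carrier_mat n s"
    and "Re (mtrace (A * mat_adjoint A)) \<le> P0"
    and "unitary_mat U1 s"
    and "\<And>i j. i \<le> j \<Longrightarrow> j < s \<Longrightarrow> l1 j \<le> l1 i"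
    and "\<And>i. i < s \<Longrightarrow> 0 \<le> l1 i"
    and "mat_adjoint A * Psi * A = U1 * rdiag s l1 * mat_adjoint U1"
  shows "let p = (\<lambda>i. if l2 i = 0 then 0 else l1 i / l2 i);
             P = mat n s (\<lambda>(i, j). if i = j then p j else (0::real));
             Phalf = map_mat sqrt P;
             At = U2 * map_mat complex_of_real Phalf
         in mat_adjoint At * Psi * At = rdiag s l1 \<and>
            Re (mtrace (At * mat_adjoint At)) \<le> Re (mtrace (A * mat_adjoint A))"
proof -
  obtain B where B: "B \<in> carrier_mat n s" and gram: "mat_adjoint B * rdiag n l2 * B = rdiag s l1"
    and frobenius: "mtrace (B * mat_adjoint B) = mtrace (A * mat_adjoint A)"
    using unitary_diagonalization_reduce[OF assms(5,11,9) rdiag_carrier rdiag_carrier] assms(8,14) by metis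
  note ratio = diag_congruence_ratio_le_frobenius[OF B gram assms(2,6,7,12,13)]
  define p where "p i = (if l2 i = 0 then 0 else l1 i / l2 i)" for i
  have p_nonneg: "0 \<le> p j" if "j < s" for j
    using that assms(2,7,13) by (simp add: p_def)
  define R where "R = rect_diag n s (\<lambda>j. sqrt (p j))"
  have R: "map_mat complex_of_real (map_mat sqrt (mat n s (\<lambda>(i, j). if i = j then p j else 0))) = R"
    by (rule eq_matI) (auto simp: R_def rect_diag_def)
  have "mat_adjoint (U2 * R) * Psi * (U2 * R) = rdiag s (\<lambda>j. (sqrt (p j))\<^sup>2 * l2 j)"
    unfolding assms(8) R_def unitary_congruence[OF assms(5) rdiag_carrier rect_diag_carrier]
    by (rule rect_diag_congruence[OF assms(2)])
  also have "\<dots> = rdiag s l1"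
    using p_nonneg ratio(1) by (intro rdiag_cong) (simp add: p_def)
  finally have congruence: "mat_adjoint (U2 * R) * Psi * (U2 * R) = rdiag s l1" .
  have "mtrace (U2 * R * mat_adjoint (U2 * R)) = complex_of_real (\<Sum>j<s. (sqrt (p j))\<^sup>2)"
    unfolding R_def mtrace_mult_adjoint_unitary_left[OF assms(5) rect_diag_carrier]
    by (rule mtrace_rect_diag[OF assms(2)])
  then have trace: "Re (mtrace (U2 * R * mat_adjoint (U2 * R))) \<le> Re (mtrace (A * mat_adjoint A))"
    using ratio(2) p_nonneg by (simp add: frobenius p_def)
  show ?thesis
    unfolding Let_def R[unfolded p_def] using congruence trace by simp
qed

end
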